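(* For every integer $k\geq 6$, any deterministic distributed dynamic data structure for $k$-cycle listing that handles edge insertions and deletions requires $\Omega\left(\frac{\sqrt{n}}{\log n}\right)$ amortized rounds.
   Context: Highly dynamic network model: a synchronous network on a fixed set $V$ of $n$ nodes with unique identifiers starts as the empty graph; at the beginning of round $i$ the graph is $G_i=(V,E_i)$, obtained from the previous graph by an adversary inserting and/or deleting an arbitrary (unbounded) set of edges. At the start of each round every node is notified only of the insertions/deletions of edges incident to it; then each node may send a message of $O(\log n)$ bits to each of its current neighbors. A distributed dynamic data structure consists of a local part $DS_v$ at each node $v$; at the end of every round, $DS_v$ may be queried and must answer immediately, without any further communication, with $\texttt{true}$, $\texttt{false}$ or $\texttt{inconsistent}$. The amortized round complexity is at most $c$ if for every round $i$, the number of rounds up to round $i$ in which at least one node $v$ has $DS_v$ in an inconsistent state, divided by the total number of topology changes that occurred up to round $i$, is at most $c$. $k$-cycle listing: in round $i$, $DS_v$ at each node $v$ responds to queries of the form $H=\{v,u_1,\ldots,u_{k-1}\}$ (a cyclically ordered set of $k$ nodes containing $v$) with $\texttt{true}$, $\texttt{false}$ or $\texttt{inconsistent}$, such that if all nodes of $H$ are queried with $H$, then either at least one node responds $\texttt{inconsistent}$, or at least one node responds $\texttt{true}$ if and only if $H$ is a $k$-cycle in $G_{i-1}$. *)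

theory Defs
  imports Complex_Main
begin

definition valid_graph :: "nat \<Rightarrow> nat set set \<Rightarrow> bool" where
  "valid_graph n E \<longleftrightarrow> (\<forall>e\<in>E. \<exists>u v. u < n \<and> v < n \<and> u \<noteq> v \<and> e = {u, v})"

text \<open>An adversary: the sequence of graphs G i at the beginning of round i
  (rounds are numbered 1,2,...); G 0 is the initial empty graph. Changes between
  consecutive graphs are arbitrary.\<close>

definition adversary :: "nat \<Rightarrow> (nat \<Rightarrow> nat set set) \<Rightarrow> bool" where
  "adversary n G \<longleftrightarrow> G 0 = {} \<and> (\<forall>i. valid_graph n (G i))"

definition nbrs :: "nat set set \<Rightarrow> nat \<Rightarrow> nat set" where
  "nbrs E v = {u. {u, v} \<in> E}"

text \<open>Notifications at the start of round i: inserted / deleted incident edges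
  (given by the other endpoint).\<close>

definition ins :: "(nat \<Rightarrow> nat set set) \<Rightarrow> nat \<Rightarrow> nat \<Rightarrow> nat set" where
  "ins G i v = nbrs (G i) v - nbrs (G (i - 1)) v"

definition del :: "(nat \<Rightarrow> nat set set) \<Rightarrow> nat \<Rightarrow> nat \<Rightarrow> nat set" where
  "del G i v = nbrs (G (i - 1)) v - nbrs (G i) v"

definition changes :: "(nat \<Rightarrow> nat set set) \<Rightarrow> nat \<Rightarrow> nat" where
  "changes G i = (\<Sum>j\<in>{1..i}. card ((G j - G (j - 1)) \<union> (G (j - 1) - G j)))"

text \<open>All local functions receive the network size n and the node's own identifier.
  \<^item> dinit n v: initial local state;
  \<^item> dmsg n v s I D u: the message (bit string) sent by v to its current neighbour u,
    given v's state s from the end of the previous round and its notifications I, D;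
  \<^item> dtrans n v s I D R: new local state, where R u = Some m iff u is a current
    neighbour that sent message m;
  \<^item> dincons n v s: whether the local part DS_v is in an inconsistent state
    (then it answers 'inconsistent' to every query);
  \<^item> dans n v s H: the true/false answer to the query H otherwise.\<close>

record 's dds =
  dinit :: "nat \<Rightarrow> nat \<Rightarrow> 's"
  dmsg :: "nat \<Rightarrow> nat \<Rightarrow> 's \<Rightarrow> nat set \<Rightarrow> nat set \<Rightarrow> nat \<Rightarrow> bool list"
  dtrans :: "nat \<Rightarrow> nat \<Rightarrow> 's \<Rightarrow> nat set \<Rightarrow> nat set \<Rightarrow> (nat \<Rightarrow> bool list option) \<Rightarrow> 's"
  dincons :: "nat \<Rightarrow> nat \<Rightarrow> 's \<Rightarrow> bool"
  dans :: "nat \<Rightarrow> nat \<Rightarrow> 's \<Rightarrow> nat list \<Rightarrow> bool"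

text \<open>run A n G i v: the local state of node v at the end of round i.\<close>

fun run :: "'s dds \<Rightarrow> nat \<Rightarrow> (nat \<Rightarrow> nat set set) \<Rightarrow> nat \<Rightarrow> nat \<Rightarrow> 's" where
  "run A n G 0 = (\<lambda>v. dinit A n v)"
| "run A n G (Suc i) =
     (\<lambda>v. dtrans A n v (run A n G i v) (ins G (Suc i) v) (del G (Suc i) v)
            (\<lambda>u. if u \<in> nbrs (G (Suc i)) v
                 then Some (dmsg A n u (run A n G i u) (ins G (Suc i) u) (del G (Suc i) u) v)
                 else None))"

definition bandwidth :: "'s dds \<Rightarrow> nat \<Rightarrow> real \<Rightarrow> bool" where
  "bandwidth A n c \<longleftrightarrow>
     (\<forall>v s I D u. real (length (dmsg A n v s I D u)) \<le> c * ln (real n))"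

definition is_kcycle :: "nat set set \<Rightarrow> nat \<Rightarrow> nat list \<Rightarrow> bool" where
  "is_kcycle E k H \<longleftrightarrow> length H = k \<and> distinct H \<and>
     (\<forall>j<k. {H ! j, H ! ((j + 1) mod k)} \<in> E)"

definition lists_kcycles :: "'s dds \<Rightarrow> nat \<Rightarrow> nat \<Rightarrow> bool" where
  "lists_kcycles A n k \<longleftrightarrow>
     (\<forall>G i H. adversary n G \<and> i \<ge> 1 \<and> length H = k \<and> distinct H \<and> set H \<subseteq> {..<n} \<longrightarrow>
        (\<forall>v\<in>set H. \<not> dincons A n v (run A n G i v)) \<longrightarrow>
        ((\<exists>v\<in>set H. dans A n v (run A n G i v) H) \<longleftrightarrow> is_kcycle (G (i - 1)) k H))"

definition incons_rounds :: "'s dds \<Rightarrow> nat \<Rightarrow> (nat \<Rightarrow> nat set set) \<Rightarrow> nat \<Rightarrow> nat" where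
  "incons_rounds A n G i = card {j \<in> {1..i}. \<exists>v<n. dincons A n v (run A n G j v)}"

text \<open>Amortized round complexity at most c: for every adversary and every round i,
  (#inconsistent rounds up to i) / (#changes up to i) \<le> c, written without division.\<close>

definition amortized_at_most :: "'s dds \<Rightarrow> nat \<Rightarrow> real \<Rightarrow> bool" where
  "amortized_at_most A n c \<longleftrightarrow>
     (\<forall>G i. adversary n G \<longrightarrow> real (incons_rounds A n G i) \<le> c * real (changes G i))"

end

theory Submission
  imports Defs "HOL-Library.FuncSet" "HOL-Real_Asymp.Real_Asymp"
begin

text \<open>The adversary encodes a uniformly random set Z of slots into 2r gadgets and then runs
  through r * r phases of L rounds; in phase (p, q) the gadgets p and r + q are joined by two bridge
  edges, and for each slot i a fixed k-cycle exists iff (p, i) and (r + q, i) both lie in Z. In a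
  phase with a round in which both gadgets are consistent, the correct answers to these s queries
  reveal the common slots of the two rows, which number s/4 on average. But everything a gadget
  knows is determined by its own row and by the O(r L b) bits that cross its bridges, so on
  average it can reveal only O(r L b) slots of other rows. Hence, for some Z, a constant fraction
  of the phases have an inconsistent node in all but their first round: Omega(r^2 L)
  inconsistent rounds against O(r (s + d) + r^2) topology changes. With r = s ~ sqrt n / 2
  and L ~ sqrt n / log n this is the bound.\<close>

section \<open>Subsets revealed by a bounded view\<close>

lemma double_le_exp: "1 \<le> y \<Longrightarrow> 2 * y \<le> (2::nat) ^ y"
proof (induction y rule: nat_induct_at_least)
  case (Suc y)
  then show ?case
    using one_le_power[of "2::nat" y] by simp
qed simp

lemma mult_exp_le_exp:
  assumes "2 * M + 3 \<le> x"
  shows "x * 2 ^ M \<le> (2::nat) ^ x"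
proof -
  have "x * 2 ^ M \<le> 2 * (x - M) * 2 ^ M"
    using assms by simp
  also have "\<dots> \<le> 2 ^ (x - M) * 2 ^ M"
    using double_le_exp[of "x - M"] assms by simp
  also have "\<dots> = 2 ^ x"
    using assms by (simp flip: power_add)
  finally show ?thesis .
qed

lemma card_Pow_extending_le:
  assumes "finite U" "R \<subseteq> U" "B \<subseteq> U - R"
  shows "card {Z \<in> Pow U. Z \<inter> R = Y \<and> B \<subseteq> Z} * 2 ^ card B * 2 ^ card R \<le> 2 ^ card U"
proof -
  let ?W = "U - R - B"
  have "{Z \<in> Pow U. Z \<inter> R = Y \<and> B \<subseteq> Z} \<subseteq> (\<lambda>W. W \<union> Y \<union> B) ` Pow ?W"
  proof
    fix Z assume "Z \<in> {Z \<in> Pow U. Z \<inter> R = Y \<and> B \<subseteq> Z}"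
    then have "Z = (Z - R - B) \<union> Y \<union> B" "Z - R - B \<in> Pow ?W" by auto
    then show "Z \<in> (\<lambda>W. W \<union> Y \<union> B) ` Pow ?W" by blast
  qed
  then have "card {Z \<in> Pow U. Z \<inter> R = Y \<and> B \<subseteq> Z} \<le> card ((\<lambda>W. W \<union> Y \<union> B) ` Pow ?W)"
    using assms(1) by (intro card_mono) auto
  also have "\<dots> \<le> 2 ^ card ?W"
    using card_image_le[of "Pow ?W"] assms(1) by (simp add: card_Pow)
  finally have "card {Z \<in> Pow U. Z \<inter> R = Y \<and> B \<subseteq> Z} * 2 ^ card B * 2 ^ card R
      \<le> 2 ^ card ?W * 2 ^ card B * 2 ^ card R"
    by simp
  also have "card ?W + card B + card R = card U"
    using assms by (metis Diff_partition Diff_subset card_Diff_subset finite_subset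
        le_add_diff_inverse2 card_mono)
  then have "2 ^ card ?W * 2 ^ card B * 2 ^ card R = (2::nat) ^ card U"
    by (simp flip: power_add)
  finally show ?thesis .
qed

locale bounded_view =
  fixes U R :: "'a set" and view :: "'a set \<Rightarrow> 'v" and B :: "'a set \<Rightarrow> 'a set" and M :: nat
  assumes finite_U: "finite U" and R_subset: "R \<subseteq> U"
    and view_determines: "\<And>Z Z'. Z \<subseteq> U \<Longrightarrow> Z' \<subseteq> U \<Longrightarrow> view Z = view Z' \<Longrightarrow>
      B Z = B Z' \<and> Z \<inter> R = Z' \<inter> R"
    and B_subset: "\<And>Z. Z \<subseteq> U \<Longrightarrow> B Z \<subseteq> Z - R"
    and card_views: "card (view ` Pow U) \<le> 2 ^ card R * 2 ^ M"
begin

text \<open>All sets in a fiber of the view agree on R and contain the revealed set, so a fiber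
  revealing m elements has at most 2^(|U| - |R| - m) members.\<close>

lemma sum_card_fiber_le:
  assumes Z0: "Z0 \<subseteq> U" "2 * M + 3 \<le> card (B Z0)"
  shows "(\<Sum>Z\<in>{Z \<in> Pow U. view Z = view Z0}. card (B Z)) * (2 ^ M * 2 ^ card R) \<le> 2 ^ card U"
proof -
  let ?F = "{Z \<in> Pow U. view Z = view Z0}"
  let ?S = "{Z \<in> Pow U. Z \<inter> R = Z0 \<inter> R \<and> B Z0 \<subseteq> Z}"
  have fiber: "B Z = B Z0 \<and> Z \<inter> R = Z0 \<inter> R" if "Z \<in> ?F" for Z
    using view_determines that Z0 by blast
  have "?F \<subseteq> ?S"
    using fiber B_subset by blast
  then have "card ?F \<le> card ?S"
    using finite_U by (intro card_mono) auto
  have B0: "B Z0 \<subseteq> U - R"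
    using B_subset[OF Z0(1)] Z0(1) by blast
  have "(\<Sum>Z\<in>?F. card (B Z)) * (2 ^ M * 2 ^ card R) = card ?F * (card (B Z0) * 2 ^ M) * 2 ^ card R"
    using fiber by (simp add: mult_ac)
  also have "\<dots> \<le> card ?S * 2 ^ card (B Z0) * 2 ^ card R"
    using \<open>card ?F \<le> card ?S\<close> mult_exp_le_exp[OF Z0(2)] by (intro mult_le_mono mult_le_mono1) auto
  also have "\<dots> \<le> 2 ^ card U"
    by (rule card_Pow_extending_le[OF finite_U R_subset B0])
  finally show ?thesis .
qed

lemma sum_card_large_le:
  "(\<Sum>Z\<in>{Z \<in> Pow U. 2 * M + 3 \<le> card (B Z)}. card (B Z)) \<le> 2 ^ card U"
proof -
  let ?large = "{Z \<in> Pow U. 2 * M + 3 \<le> card (B Z)}"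
  have fin: "finite (Pow U)"
    using finite_U by simp
  have "(\<Sum>Z\<in>?large. card (B Z)) * (2 ^ M * 2 ^ card R)
      = (\<Sum>w\<in>view ` ?large. (\<Sum>Z\<in>{Z \<in> ?large. view Z = w}. card (B Z)) * (2 ^ M * 2 ^ card R))"
    using fin by (subst sum.image_gen[of _ _ view]) (simp_all add: sum_distrib_right)
  also have "\<dots> \<le> (\<Sum>w\<in>view ` ?large. 2 ^ card U)"
  proof (rule sum_mono)
    fix w assume "w \<in> view ` ?large"
    then obtain Z0 where Z0: "Z0 \<in> ?large" "w = view Z0" by blast
    have "(\<Sum>Z\<in>{Z \<in> ?large. view Z = w}. card (B Z)) * (2 ^ M * 2 ^ card R)
        \<le> (\<Sum>Z\<in>{Z \<in> Pow U. view Z = view Z0}. card (B Z)) * (2 ^ M * 2 ^ card R)"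
      using fin Z0 by (intro mult_le_mono1 sum_mono2) auto
    also have "\<dots> \<le> 2 ^ card U"
      using Z0 by (intro sum_card_fiber_le) auto
    finally show "(\<Sum>Z\<in>{Z \<in> ?large. view Z = w}. card (B Z)) * (2 ^ M * 2 ^ card R) \<le> 2 ^ card U" .
  qed
  also have "\<dots> = card (view ` ?large) * 2 ^ card U"
    by simp
  also have "\<dots> \<le> card (view ` Pow U) * 2 ^ card U"
    using fin by (intro mult_le_mono1 card_mono image_mono) auto
  also have "\<dots> \<le> 2 ^ card U * (2 ^ M * 2 ^ card R)"
    using card_views by (simp add: mult_ac)
  finally show ?thesis
    by simp
qed

lemma sum_card_le:
  "(\<Sum>Z\<in>Pow U. card (B Z)) \<le> (2 * M + 3) * 2 ^ card U"
proof -
  let ?small = "{Z \<in> Pow U. card (B Z) < 2 * M + 3}"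
  let ?large = "{Z \<in> Pow U. 2 * M + 3 \<le> card (B Z)}"
  have fin: "finite (Pow U)"
    using finite_U by simp
  have "(\<Sum>Z\<in>?small. card (B Z)) \<le> card ?small * (2 * M + 2)"
    using sum_bounded_above[of ?small "\<lambda>Z. card (B Z)" "2 * M + 2"] by simp
  also have "\<dots> \<le> 2 ^ card U * (2 * M + 2)"
    using card_mono[OF fin, of ?small] finite_U by (intro mult_le_mono1) (auto simp: card_Pow)
  finally have small: "(\<Sum>Z\<in>?small. card (B Z)) \<le> (2 * M + 2) * 2 ^ card U"
    by (simp only: mult.commute)
  have "(\<Sum>Z\<in>Pow U. card (B Z)) = (\<Sum>Z\<in>?small \<union> ?large. card (B Z))"
    by (rule sum.cong) auto
  also have "\<dots> = (\<Sum>Z\<in>?small. card (B Z)) + (\<Sum>Z\<in>?large. card (B Z))"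
    using fin by (intro sum.union_disjoint) auto
  finally show ?thesis
    using small sum_card_large_le by (simp add: algebra_simps)
qed

end

lemma card_Pow_containing_pair:
  assumes "finite U" "a \<in> U" "b \<in> U" "a \<noteq> b"
  shows "4 * card {Z \<in> Pow U. a \<in> Z \<and> b \<in> Z} = 2 ^ card U"
proof -
  let ?W = "U - {a, b}"
  have "{Z \<in> Pow U. a \<in> Z \<and> b \<in> Z} = (\<lambda>W. W \<union> {a, b}) ` Pow ?W"
  proof
    show "{Z \<in> Pow U. a \<in> Z \<and> b \<in> Z} \<subseteq> (\<lambda>W. W \<union> {a, b}) ` Pow ?W"
    proof
      fix Z assume "Z \<in> {Z \<in> Pow U. a \<in> Z \<and> b \<in> Z}"
      then have "Z = (Z - {a, b}) \<union> {a, b}" "Z - {a, b} \<in> Pow ?W" by auto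
      then show "Z \<in> (\<lambda>W. W \<union> {a, b}) ` Pow ?W" by blast
    qed
  qed (use assms in auto)
  moreover have "inj_on (\<lambda>W. W \<union> {a, b}) (Pow ?W)"
    by (rule inj_onI) blast
  ultimately have "card {Z \<in> Pow U. a \<in> Z \<and> b \<in> Z} = 2 ^ (card U - 2)"
    using assms by (simp add: card_image card_Pow card_Diff_subset)
  moreover have "2 \<le> card U"
    using assms card_mono[of U "{a, b}"] by simp
  ultimately show ?thesis
    by (metis le_add_diff_inverse mult.commute power_add power2_eq_square numeral_Bit0 mult_2)
qed

lemma sum_lessThan_double: "(\<Sum>c<2 * r. f c) = (\<Sum>p<r. f p) + (\<Sum>q<r. f (r + q))" for r :: nat
proof -
  have "{..<2 * r} = {..<r} \<union> {r..<r + r}"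
    by auto
  then have "(\<Sum>c<2 * r. f c) = (\<Sum>p<r. f p) + (\<Sum>c\<in>{r..<r + r}. f c)"
    by (simp add: sum.union_disjoint ivl_disj_int_one(2))
  also have "(\<Sum>c\<in>{r..<r + r}. f c) = (\<Sum>q<r. f (r + q))"
    using sum.shift_bounds_nat_ivl[of f 0 r r] by (simp add: atLeast0LessThan add.commute)
  finally show ?thesis .
qed

section \<open>Locality of runs\<close>

lemma run_eq_on:
  assumes same_nbrs: "\<And>j v. v \<in> X \<Longrightarrow> nbrs (G j) v = nbrs (G' j) v"
    and same_msgs: "\<And>j v u. 1 \<le> j \<Longrightarrow> v \<in> X \<Longrightarrow> u \<in> nbrs (G j) v \<Longrightarrow> u \<notin> X \<Longrightarrow>
        dmsg A n u (run A n G (j - 1) u) (ins G j u) (del G j u) v =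
        dmsg A n u (run A n G' (j - 1) u) (ins G' j u) (del G' j u) v"
    and "v \<in> X"
  shows "run A n G j v = run A n G' j v"
  using \<open>v \<in> X\<close>
proof (induction j arbitrary: v)
  case (Suc j)
  have notifications: "ins G i w = ins G' i w" "del G i w = del G' i w" if "w \<in> X" for i w
    using same_nbrs[OF that] unfolding ins_def del_def by auto
  have "dmsg A n u (run A n G j u) (ins G (Suc j) u) (del G (Suc j) u) v =
        dmsg A n u (run A n G' j u) (ins G' (Suc j) u) (del G' (Suc j) u) v"
    if "u \<in> nbrs (G (Suc j)) v" for u
    using Suc.IH[of u] notifications[of u] same_msgs[of "Suc j" v u] that Suc.prems
    by (cases "u \<in> X") auto
  then show ?case
    using Suc.IH[OF Suc.prems] notifications[OF Suc.prems] same_nbrs[OF Suc.prems] by (simp cong: if_cong)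
qed simp

section \<open>The adversary\<close>

text \<open>The rounds are cut into r * r phases of
  L rounds each; during phase (p, q) the two bridge edges between gadget p and gadget r + q are
  present, so that the test cycle through the middle nodes of slot i is a k-cycle iff both
  (p, i) and (r + q, i) belong to Z.\<close>

locale kcycle_lower_bound =
  fixes A :: "'s dds" and n k r s d L b :: nat
  assumes k_eq: "k = d + 6"
    and r_pos: "1 \<le> r" and s_pos: "1 \<le> s" and L_ge_2: "2 \<le> L"
    and n_ge: "2 * r * (s + d + 2) \<le> n"
    and msg_length: "\<And>v st I D u. length (dmsg A n v st I D u) \<le> b"
    and lists: "lists_kcycles A n k"
begin

definition gadget_size :: nat where
  "gadget_size = s + d + 2"

definition node :: "nat \<Rightarrow> nat \<Rightarrow> nat" where
  "node c x = c * gadget_size + x"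

definition gadget :: "nat \<Rightarrow> nat set" where
  "gadget c = {c * gadget_size..<c * gadget_size + gadget_size}"

definition slots :: "(nat \<times> nat) set" where
  "slots = {..<2 * r} \<times> {..<s}"

definition row :: "nat \<Rightarrow> (nat \<times> nat) set" where
  "row c = {c} \<times> {..<s}"

definition gadget_edges :: "nat \<Rightarrow> (nat \<times> nat) set \<Rightarrow> nat set set" where
  "gadget_edges c Z = {{node c m, node c (Suc m)} | m. m < d}
     \<union> {{node c d, node c (d + 2 + i)} | i. (c, i) \<in> Z}
     \<union> {{node c (d + 2 + i), node c (d + 1)} | i. (c, i) \<in> Z}"

definition static_edges :: "(nat \<times> nat) set \<Rightarrow> nat set set" where
  "static_edges Z = (\<Union>c<2 * r. gadget_edges c Z)"

definition bridge :: "nat \<Rightarrow> nat \<Rightarrow> nat set set" where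
  "bridge p q = {{node p 0, node (r + q) d}, {node p (d + 1), node (r + q) (d + 1)}}"

definition bridge_at :: "nat \<Rightarrow> nat set set" where
  "bridge_at j = (if 1 \<le> j \<and> (j - 1) div L < r * r
     then bridge ((j - 1) div L div r) ((j - 1) div L mod r) else {})"

definition graphs :: "(nat \<times> nat) set \<Rightarrow> nat \<Rightarrow> nat set set" where
  "graphs Z j = (if j = 0 then {} else static_edges Z \<union> bridge_at j)"

definition state :: "(nat \<times> nat) set \<Rightarrow> nat \<Rightarrow> nat \<Rightarrow> 's" where
  "state Z = run A n (graphs Z)"

lemma node_eq_iff:
  assumes "x < gadget_size" "y < gadget_size"
  shows "node c x = node c' y \<longleftrightarrow> c = c' \<and> x = y"
proof
  assume "node c x = node c' y"
  then have "(c * gadget_size + x) div gadget_size = (c' * gadget_size + y) div gadget_size"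
    "(c * gadget_size + x) mod gadget_size = (c' * gadget_size + y) mod gadget_size"
    unfolding node_def by simp_all
  then show "c = c' \<and> x = y"
    using assms by simp
qed simp

lemma node_in_gadget: "x < gadget_size \<Longrightarrow> node c x \<in> gadget c"
  unfolding node_def gadget_def by simp

lemma gadget_disjoint:
  assumes "v \<in> gadget c" "v \<in> gadget c'"
  shows "c = c'"
proof -
  have "v div gadget_size = c" "v div gadget_size = c'"
    using assms unfolding gadget_def by (auto simp: div_nat_eqI mult.commute)
  then show ?thesis by simp
qed

lemma gadget_lt_n:
  assumes "c < 2 * r" "v \<in> gadget c"
  shows "v < n"
proof -
  have "v < (c + 1) * gadget_size"
    using assms(2) unfolding gadget_def by simp
  also have "\<dots> \<le> 2 * r * gadget_size"
    using assms(1) by (intro mult_right_mono) auto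
  also have "\<dots> \<le> n"
    using n_ge unfolding gadget_size_def .
  finally show ?thesis .
qed

lemma gadget_edgeE:
  assumes "Z \<subseteq> slots" "e \<in> gadget_edges c Z"
  obtains x y where "e = {node c x, node c y}" "x \<noteq> y" "x < gadget_size" "y < gadget_size"
proof -
  have size: "d + 1 < gadget_size" "(c, i) \<in> Z \<Longrightarrow> d + 2 + i < gadget_size" for i
    using assms(1) unfolding slots_def gadget_size_def by auto
  from assms(2) consider m where "m < d" "e = {node c m, node c (Suc m)}"
    | i where "(c, i) \<in> Z" "e = {node c d, node c (d + 2 + i)}"
    | i where "(c, i) \<in> Z" "e = {node c (d + 2 + i), node c (d + 1)}"
    unfolding gadget_edges_def by blast
  then show ?thesis
  proof cases
    case (1 m)
    then show ?thesis using that[of m "Suc m"] size by simp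
  next
    case (2 i)
    then show ?thesis using that[of d "d + 2 + i"] size by simp
  next
    case (3 i)
    then show ?thesis using that[of "d + 2 + i" "d + 1"] size by simp
  qed
qed

lemma gadget_edges_subset: "Z \<subseteq> slots \<Longrightarrow> e \<in> gadget_edges c Z \<Longrightarrow> e \<subseteq> gadget c"
  by (erule gadget_edgeE) (auto intro: node_in_gadget)

lemma bridge_atE:
  assumes "e \<in> bridge_at j"
  obtains p q where "p < r" "q < r" "1 \<le> j" "(j - 1) div L = p * r + q" "e \<in> bridge p q"
proof -
  let ?f = "(j - 1) div L"
  have "1 \<le> j" "?f < r * r" "e \<in> bridge (?f div r) (?f mod r)"
    using assms unfolding bridge_at_def by (auto split: if_splits)
  moreover have "?f div r < r"
    using \<open>?f < r * r\<close> by (simp add: less_mult_imp_div_less)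
  ultimately show ?thesis
    by (intro that[of "?f div r" "?f mod r"]) (use r_pos in simp_all)
qed

lemma valid_node_pair:
  assumes "c < 2 * r" "c' < 2 * r" "x < gadget_size" "y < gadget_size" "(c, x) \<noteq> (c', y)"
  shows "\<exists>u v. u < n \<and> v < n \<and> u \<noteq> v \<and> {node c x, node c' y} = {u, v}"
proof -
  have "node c x \<noteq> node c' y"
    using assms node_eq_iff by auto
  moreover have "node c x < n" "node c' y < n"
    using assms gadget_lt_n node_in_gadget by blast+
  ultimately show ?thesis
    by blast
qed

lemma adversary_graphs:
  assumes "Z \<subseteq> slots"
  shows "adversary n (graphs Z)"
  unfolding adversary_def valid_graph_def
proof (intro conjI allI ballI)
  fix j e assume "e \<in> graphs Z j"
  then consider c where "c < 2 * r" "e \<in> gadget_edges c Z" | "e \<in> bridge_at j"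
    unfolding graphs_def static_edges_def by (auto split: if_splits)
  then show "\<exists>u v. u < n \<and> v < n \<and> u \<noteq> v \<and> e = {u, v}"
  proof cases
    case 1
    obtain x y where "e = {node c x, node c y}" "x \<noteq> y" "x < gadget_size" "y < gadget_size"
      by (rule gadget_edgeE[OF assms 1(2)])
    then show ?thesis
      using valid_node_pair[of c c x y] 1(1) by auto
  next
    case 2
    then obtain p q where pq: "p < r" "q < r" "e \<in> bridge p q"
      by (rule bridge_atE)
    have "\<exists>u v. u < n \<and> v < n \<and> u \<noteq> v \<and> {node p 0, node (r + q) d} = {u, v}"
      "\<exists>u v. u < n \<and> v < n \<and> u \<noteq> v \<and> {node p (d + 1), node (r + q) (d + 1)} = {u, v}"
      by (rule valid_node_pair; use pq in \<open>simp add: gadget_size_def\<close>)+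
    then show ?thesis
      using pq(3) unfolding bridge_def by blast
  qed
qed (simp add: graphs_def)

lemma static_edge_iff:
  assumes "Z \<subseteq> slots" "v \<in> gadget c"
  shows "{u, v} \<in> static_edges Z \<longleftrightarrow> c < 2 * r \<and> {u, v} \<in> gadget_edges c Z"
proof
  assume "{u, v} \<in> static_edges Z"
  then obtain c' where "c' < 2 * r" "{u, v} \<in> gadget_edges c' Z"
    unfolding static_edges_def by blast
  moreover from this have "c' = c"
    using gadget_edges_subset[OF assms(1)] gadget_disjoint assms(2) by blast
  ultimately show "c < 2 * r \<and> {u, v} \<in> gadget_edges c Z"
    by simp
qed (auto simp: static_edges_def)

lemma gadget_edges_row:
  assumes "Z \<subseteq> slots" "Z' \<subseteq> slots" "Z \<inter> row c = Z' \<inter> row c"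
  shows "gadget_edges c Z = gadget_edges c Z'"
proof -
  have "(c, i) \<in> Z \<longleftrightarrow> (c, i) \<in> Z'" for i
    using assms unfolding slots_def row_def by blast
  then show ?thesis
    unfolding gadget_edges_def by simp
qed

lemma nbrs_graphs_eq:
  assumes "Z \<subseteq> slots" "Z' \<subseteq> slots" "Z \<inter> row c = Z' \<inter> row c" "v \<in> gadget c"
  shows "nbrs (graphs Z j) v = nbrs (graphs Z' j) v"
proof -
  have "{u, v} \<in> static_edges Z \<longleftrightarrow> {u, v} \<in> static_edges Z'" for u
    using static_edge_iff[OF assms(1,4)] static_edge_iff[OF assms(2,4)] gadget_edges_row[OF assms(1-3)]
    by simp
  then show ?thesis
    unfolding nbrs_def graphs_def by auto
qed

text \<open>For q < r, gadget c takes part in phase (phase_left c q, phase_right c q) together with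
  gadget partner c q, and port c e is its endpoint of the bridge edge e \<in> {0, 1}.\<close>

definition partner :: "nat \<Rightarrow> nat \<Rightarrow> nat" where
  "partner c q = (if c < r then r + q else q)"

definition phase_left :: "nat \<Rightarrow> nat \<Rightarrow> nat" where
  "phase_left c q = (if c < r then c else q)"

definition phase_right :: "nat \<Rightarrow> nat \<Rightarrow> nat" where
  "phase_right c q = (if c < r then q else c - r)"

definition port :: "nat \<Rightarrow> nat \<Rightarrow> nat" where
  "port c e = (if e = 0 then (if c < r then node c 0 else node c d) else node c (d + 1))"

definition phase_start :: "nat \<Rightarrow> nat \<Rightarrow> nat" where
  "phase_start p q = (p * r + q) * L"

lemma phase_of_gadget:
  assumes "c < 2 * r" "q < r"
  shows "phase_left c q < r" "phase_right c q < r"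
    "c = phase_left c q \<and> partner c q = r + phase_right c q \<or>
     c = r + phase_right c q \<and> partner c q = phase_left c q"
  using assms unfolding phase_left_def phase_right_def partner_def by auto

lemma round_in_phase:
  assumes "1 \<le> j" "(j - 1) div L = p * r + q"
  shows "j = phase_start p q + 1 + (j - 1) mod L"
  using assms div_mult_mod_eq[of "j - 1" L] unfolding phase_start_def by simp

lemma bridge_edge_not_within_gadget:
  assumes "p < r" "q < r" "e \<in> bridge p q"
  shows "\<not> e \<subseteq> gadget c"
proof -
  have separate: False if "node p x \<in> gadget c" "node (r + q) y \<in> gadget c" "x \<le> d + 1" "y \<le> d + 1" for x y
    using gadget_disjoint[of "node p x" c p] gadget_disjoint[of "node (r + q) y" c "r + q"]
      node_in_gadget that assms(1,2) unfolding gadget_size_def by simp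
  then show ?thesis
    using assms(3) separate[of 0 d] separate[of "d + 1" "d + 1"] unfolding bridge_def by auto
qed

lemma bridge_endpoints:
  assumes "p < r" "q < r" "{u, v} \<in> bridge p q" "v \<in> gadget c"
  obtains q' e where "q' < r" "e < 2" "p = phase_left c q'" "q = phase_right c q'"
    "v = port c e" "u = port (partner c q') e"
proof -
  have "node p x \<in> gadget p" "node (r + q) x \<in> gadget (r + q)" if "x \<le> d + 1" for x
    using that node_in_gadget unfolding gadget_size_def by simp_all
  then have in_gadget: "node p 0 \<in> gadget p" "node p (d + 1) \<in> gadget p"
      "node (r + q) d \<in> gadget (r + q)" "node (r + q) (d + 1) \<in> gadget (r + q)"
    by simp_all
  note phase_defs = phase_left_def phase_right_def partner_def port_def
  from assms(3) consider "v = node p 0" "u = node (r + q) d" | "v = node (r + q) d" "u = node p 0"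
    | "v = node p (d + 1)" "u = node (r + q) (d + 1)" | "v = node (r + q) (d + 1)" "u = node p (d + 1)"
    unfolding bridge_def by (auto simp: doubleton_eq_iff)
  then show ?thesis
  proof cases
    case 1
    then have "c = p" using gadget_disjoint[of v c "p"] assms(4) in_gadget(1) 1 by simp
    with 1 show ?thesis using assms by (intro that[of q 0]) (simp_all add: phase_defs)
  next
    case 2
    then have "c = r + q" using gadget_disjoint[of v c "r + q"] assms(4) in_gadget(3) 2 by simp
    with 2 show ?thesis using assms by (intro that[of p 0]) (simp_all add: phase_defs)
  next
    case 3
    then have "c = p" using gadget_disjoint[of v c "p"] assms(4) in_gadget(2) 3 by simp
    with 3 show ?thesis using assms by (intro that[of q 1]) (simp_all add: phase_defs)
  next
    case 4
    then have "c = r + q" using gadget_disjoint[of v c "r + q"] assms(4) in_gadget(4) 4 by simp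
    with 4 show ?thesis using assms by (intro that[of p 1]) (simp_all add: phase_defs)
  qed
qed

lemma outside_nbrE:
  assumes "Z \<subseteq> slots" "v \<in> gadget c" "u \<in> nbrs (graphs Z j) v" "u \<notin> gadget c"
  obtains q' m e where "q' < r" "m < L" "e < 2"
    "j = phase_start (phase_left c q') (phase_right c q') + 1 + m" "v = port c e" "u = port (partner c q') e"
proof -
  have "{u, v} \<notin> static_edges Z"
    using static_edge_iff[OF assms(1,2)] gadget_edges_subset[OF assms(1)] assms(4) by blast
  then have "{u, v} \<in> bridge_at j"
    using assms(3) unfolding nbrs_def graphs_def by (auto split: if_splits)
  then obtain p q where pq: "p < r" "q < r" "1 \<le> j" "(j - 1) div L = p * r + q" "{u, v} \<in> bridge p q"
    by (rule bridge_atE)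
  obtain q' e where "q' < r" "e < 2" "p = phase_left c q'" "q = phase_right c q'"
    "v = port c e" "u = port (partner c q') e"
    using bridge_endpoints[OF pq(1,2,5) assms(2)] .
  moreover have "(j - 1) mod L < L"
    using L_ge_2 by simp
  ultimately show ?thesis
    using round_in_phase[OF pq(3,4)] by (intro that[of q' "(j - 1) mod L" e]) simp_all
qed

section \<open>What a gadget knows\<close>

definition msg_index :: "(nat \<times> nat \<times> nat) set" where
  "msg_index = {..<r} \<times> {..<L} \<times> {..<2}"

text \<open>incoming Z c (q, m, e) is the message that gadget c receives over bridge edge e in
  round m + 1 of its q-th phase.\<close>

definition incoming :: "(nat \<times> nat) set \<Rightarrow> nat \<Rightarrow> nat \<times> nat \<times> nat \<Rightarrow> bool list" where
  "incoming Z c = (\<lambda>(q, m, e).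
     let t = phase_start (phase_left c q) (phase_right c q) + m; u = port (partner c q) e
     in dmsg A n u (state Z t u) (ins (graphs Z) (t + 1) u) (del (graphs Z) (t + 1) u) (port c e))"

lemma state_eq_if_same_input:
  assumes "Z \<subseteq> slots" "Z' \<subseteq> slots" "Z \<inter> row c = Z' \<inter> row c"
    "restrict (incoming Z c) msg_index = restrict (incoming Z' c) msg_index" "v \<in> gadget c"
  shows "state Z j v = state Z' j v"
  unfolding state_def
proof (rule run_eq_on[where X = "gadget c"])
  fix j v u assume "1 \<le> j" "v \<in> gadget c" "u \<in> nbrs (graphs Z j) v" "u \<notin> gadget c"
  then obtain q m e where qme: "q < r" "m < L" "e < 2"
    "j = phase_start (phase_left c q) (phase_right c q) + 1 + m" "v = port c e" "u = port (partner c q) e"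
    using outside_nbrE[OF assms(1)] by blast
  then have "incoming Z c (q, m, e) = incoming Z' c (q, m, e)"
    using fun_cong[OF assms(4), of "(q, m, e)"] unfolding msg_index_def by simp
  then show "dmsg A n u (run A n (graphs Z) (j - 1) u) (ins (graphs Z) j u) (del (graphs Z) j u) v =
      dmsg A n u (run A n (graphs Z') (j - 1) u) (ins (graphs Z') j u) (del (graphs Z') j u) v"
    unfolding incoming_def state_def qme(4-6) by (simp add: Let_def)
qed (use nbrs_graphs_eq[OF assms(1-3)] assms(5) in auto)

definition consistent_at :: "(nat \<times> nat) set \<Rightarrow> nat \<Rightarrow> nat \<Rightarrow> nat \<Rightarrow> bool" where
  "consistent_at Z p q t \<longleftrightarrow> (\<forall>v \<in> gadget p \<union> gadget (r + q). \<not> dincons A n v (state Z t v))"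

text \<open>Only rounds 2..L of a phase qualify: the answers in round x concern the graph of
  round x - 1, which must already contain the bridge edges of the phase.\<close>

definition query_round :: "(nat \<times> nat) set \<Rightarrow> nat \<Rightarrow> nat \<Rightarrow> nat option" where
  "query_round Z p q = (if \<exists>x\<in>{2..L}. consistent_at Z p q (phase_start p q + x)
     then Some (SOME x. x \<in> {2..L} \<and> consistent_at Z p q (phase_start p q + x)) else None)"

lemma query_round_SomeD:
  "query_round Z p q = Some x \<Longrightarrow> x \<in> {2..L} \<and> consistent_at Z p q (phase_start p q + x)"
  unfolding query_round_def by (metis (no_types, lifting) option.distinct(1) option.inject someI_ex)

definition test_cycle :: "nat \<Rightarrow> nat \<Rightarrow> nat \<Rightarrow> nat list" where
  "test_cycle p q i = map (case_prod node) (map (Pair p) [0..<Suc d] @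
     [(p, d + 2 + i), (p, d + 1), (r + q, d + 1), (r + q, d + 2 + i), (r + q, d)])"

text \<open>The query rounds are part of the view because they also depend on the partner gadgets.\<close>

definition view :: "(nat \<times> nat) set \<Rightarrow> nat \<Rightarrow>
    (nat \<times> nat) set \<times> (nat \<times> nat \<times> nat \<Rightarrow> bool list) \<times> (nat \<Rightarrow> nat option)" where
  "view Z c = (Z \<inter> row c, restrict (incoming Z c) msg_index,
     restrict (\<lambda>q. query_round Z (phase_left c q) (phase_right c q)) {..<r})"

definition certified :: "(nat \<times> nat) set \<Rightarrow> nat \<Rightarrow> (nat \<times> nat) set" where
  "certified Z c = {(partner c q, i) | q i. q < r \<and> i < s \<and>
     (\<exists>x. query_round Z (phase_left c q) (phase_right c q) = Some x \<and>
       (\<exists>v\<in>set (test_cycle (phase_left c q) (phase_right c q) i) \<inter> gadget c.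
          dans A n v (state Z (phase_start (phase_left c q) (phase_right c q) + x) v)
            (test_cycle (phase_left c q) (phase_right c q) i)))}"

lemma certified_eq:
  assumes "Z \<subseteq> slots" "Z' \<subseteq> slots" "view Z c = view Z' c"
  shows "certified Z c = certified Z' c"
proof -
  have "Z \<inter> row c = Z' \<inter> row c" and "restrict (incoming Z c) msg_index = restrict (incoming Z' c) msg_index"
    and queries: "restrict (\<lambda>q. query_round Z (phase_left c q) (phase_right c q)) {..<r} =
      restrict (\<lambda>q. query_round Z' (phase_left c q) (phase_right c q)) {..<r}"
    using assms(3) unfolding view_def by simp_all
  moreover have query: "query_round Z (phase_left c q) (phase_right c q) =
      query_round Z' (phase_left c q) (phase_right c q)" if "q < r" for q
    using fun_cong[OF queries, of q] that by simp
  ultimately have "state Z j v = state Z' j v" if "v \<in> gadget c" for j v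
    using state_eq_if_same_input[OF assms(1,2)] that by blast
  then show ?thesis
    unfolding certified_def using query by (intro Collect_cong ex_cong1 conj_cong refl) auto
qed

section \<open>Test cycles\<close>

lemma node_doubleton_eq_iff:
  assumes "x < gadget_size" "y < gadget_size" "x' < gadget_size" "y' < gadget_size"
  shows "{node c x, node c y} = {node c x', node c y'} \<longleftrightarrow> {x, y} = {x', y'}"
  using node_eq_iff[OF assms(1,3)] node_eq_iff[OF assms(1,4)] node_eq_iff[OF assms(2,3)]
    node_eq_iff[OF assms(2,4)]
  by (auto simp: doubleton_eq_iff)

lemma inner_edge_iff:
  assumes "Z \<subseteq> slots" "c < 2 * r" "x < gadget_size" "y < gadget_size" "1 \<le> j"
  shows "{node c x, node c y} \<in> graphs Z j \<longleftrightarrow> {node c x, node c y} \<in> gadget_edges c Z"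
proof -
  have "{node c x, node c y} \<subseteq> gadget c"
    using node_in_gadget assms by simp
  then have "{node c x, node c y} \<notin> bridge_at j"
    using bridge_edge_not_within_gadget by (metis bridge_atE)
  moreover have "{node c x, node c y} \<in> static_edges Z \<longleftrightarrow> {node c x, node c y} \<in> gadget_edges c Z"
    using static_edge_iff[OF assms(1), of "node c y" c "node c x"] node_in_gadget assms by auto
  ultimately show ?thesis
    unfolding graphs_def using assms(5) by auto
qed

lemma middle_edge_in_gadget_edges_iff:
  assumes "Z \<subseteq> slots" "i < s"
  shows "{node c d, node c (d + 2 + i)} \<in> gadget_edges c Z \<longleftrightarrow> (c, i) \<in> Z"
proof
  have size: "d + 1 < gadget_size" "\<And>i'. i' < s \<Longrightarrow> d + 2 + i' < gadget_size"
    unfolding gadget_size_def by simp_all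
  assume "{node c d, node c (d + 2 + i)} \<in> gadget_edges c Z"
  then consider m where "m < d" "{node c d, node c (d + 2 + i)} = {node c m, node c (Suc m)}"
    | i' where "(c, i') \<in> Z" "{node c d, node c (d + 2 + i)} = {node c d, node c (d + 2 + i')}"
    | i' where "(c, i') \<in> Z" "{node c d, node c (d + 2 + i)} = {node c (d + 2 + i'), node c (d + 1)}"
    unfolding gadget_edges_def by blast
  then show "(c, i) \<in> Z"
  proof cases
    case (1 m)
    then have "{d, d + 2 + i} = {m, Suc m}"
      using node_doubleton_eq_iff[of d "d + 2 + i" m "Suc m"] size assms(2) by simp
    with 1(1) show ?thesis
      by (auto simp: doubleton_eq_iff)
  next
    case (2 i')
    moreover have "i' < s"
      using 2(1) assms(1) unfolding slots_def by auto
    ultimately have "{d, d + 2 + i} = {d, d + 2 + i'}"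
      using node_doubleton_eq_iff[of d "d + 2 + i" d "d + 2 + i'"] size assms(2) by simp
    with 2(1) show ?thesis
      by (auto simp: doubleton_eq_iff)
  next
    case (3 i')
    moreover have "i' < s"
      using 3(1) assms(1) unfolding slots_def by auto
    ultimately have "{d, d + 2 + i} = {d + 2 + i', d + 1}"
      using node_doubleton_eq_iff[of d "d + 2 + i" "d + 2 + i'" "d + 1"] size assms(2) by simp
    then show ?thesis
      by (auto simp: doubleton_eq_iff)
  qed
qed (auto simp: gadget_edges_def)

lemma middle_edge_iff:
  assumes "Z \<subseteq> slots" "c < 2 * r" "i < s" "1 \<le> j"
  shows "{node c d, node c (d + 2 + i)} \<in> graphs Z j \<longleftrightarrow> (c, i) \<in> Z"
  using inner_edge_iff[OF assms(1,2) _ _ assms(4), of d "d + 2 + i"]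
    middle_edge_in_gadget_edges_iff[OF assms(1,3)] assms(3) unfolding gadget_size_def by simp

lemma middle_edge_right:
  assumes "Z \<subseteq> slots" "(c, i) \<in> Z" "1 \<le> j"
  shows "{node c (d + 2 + i), node c (d + 1)} \<in> graphs Z j"
proof -
  have "c < 2 * r"
    using assms(1,2) unfolding slots_def by auto
  moreover have "{node c (d + 2 + i), node c (d + 1)} \<in> gadget_edges c Z"
    using assms(2) unfolding gadget_edges_def by blast
  ultimately show ?thesis
    using assms(3) unfolding graphs_def static_edges_def by auto
qed

lemma path_edge:
  assumes "c < 2 * r" "m < d" "1 \<le> j"
  shows "{node c m, node c (Suc m)} \<in> graphs Z j"
proof -
  have "{node c m, node c (Suc m)} \<in> gadget_edges c Z"
    using assms(2) unfolding gadget_edges_def by blast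
  then show ?thesis
    using assms unfolding graphs_def static_edges_def by auto
qed

lemma length_test_cycle: "length (test_cycle p q i) = k"
  unfolding test_cycle_def k_eq by simp

lemma test_cycle_nth:
  "x \<le> d \<Longrightarrow> test_cycle p q i ! x = node p x"
  "test_cycle p q i ! (d + 1) = node p (d + 2 + i)"
  "test_cycle p q i ! (d + 2) = node p (d + 1)"
  "test_cycle p q i ! (d + 3) = node (r + q) (d + 1)"
  "test_cycle p q i ! (d + 4) = node (r + q) (d + 2 + i)"
  "test_cycle p q i ! (d + 5) = node (r + q) d"
  unfolding test_cycle_def by (auto simp: nth_append numeral_eq_Suc simp del: upt_Suc)

lemma set_test_cycle_subset:
  assumes "i < s"
  shows "set (test_cycle p q i) \<subseteq> gadget p \<union> gadget (r + q)"
  unfolding test_cycle_def using assms by (auto intro!: node_in_gadget simp: gadget_size_def)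

lemma distinct_test_cycle:
  assumes "p < r" "i < s"
  shows "distinct (test_cycle p q i)"
proof -
  let ?xs = "map (Pair p) [0..<Suc d] @
     [(p, d + 2 + i), (p, d + 1), (r + q, d + 1), (r + q, d + 2 + i), (r + q, d)]"
  have "inj_on (case_prod node) (UNIV \<times> {..<gadget_size})"
    by (rule inj_onI) (auto simp: node_eq_iff)
  moreover have "set ?xs \<subseteq> UNIV \<times> {..<gadget_size}"
    using assms(2) by (auto simp: gadget_size_def)
  moreover have "distinct ?xs"
    using assms(1) by (auto simp: distinct_map inj_on_def simp del: upt_Suc)
  ultimately show ?thesis
    unfolding test_cycle_def by (subst distinct_map) (blast intro: inj_on_subset)
qed

lemma test_cycle_edge:
  assumes "x < k"
  shows "{test_cycle p q i ! x, test_cycle p q i ! ((x + 1) mod k)} \<in>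
    {{node p m, node p (Suc m)} | m. m < d} \<union> bridge p q \<union>
    {{node p d, node p (d + 2 + i)}, {node p (d + 2 + i), node p (d + 1)},
     {node (r + q) (d + 1), node (r + q) (d + 2 + i)}, {node (r + q) (d + 2 + i), node (r + q) d}}"
proof -
  consider "x < d" | "x = d" | "x = d + 1" | "x = d + 2" | "x = d + 3" | "x = d + 4" | "x = d + 5"
    using assms k_eq by linarith
  then show ?thesis
  proof cases
    case 1
    with k_eq have "(x + 1) mod k = Suc x" by simp
    with 1 have "{test_cycle p q i ! x, test_cycle p q i ! ((x + 1) mod k)} = {node p x, node p (Suc x)}"
      using test_cycle_nth(1)[of x] test_cycle_nth(1)[of "Suc x"] by simp
    with 1 show ?thesis by blast
  next
    case 2
    with k_eq have "(x + 1) mod k = d + 1" by simp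
    with 2 show ?thesis using test_cycle_nth(1)[of d] test_cycle_nth(2) by (simp only:) simp
  next
    case 3
    with k_eq have "(x + 1) mod k = d + 2" by simp
    with 3 show ?thesis using test_cycle_nth(2,3) by (simp only:) simp
  next
    case 4
    with k_eq have "(x + 1) mod k = d + 3" by simp
    with 4 show ?thesis using test_cycle_nth(3,4) by (simp only:) (simp add: bridge_def)
  next
    case 5
    with k_eq have "(x + 1) mod k = d + 4" by simp
    with 5 show ?thesis using test_cycle_nth(4,5) by (simp only:) simp
  next
    case 6
    with k_eq have "(x + 1) mod k = d + 5" by simp
    with 6 show ?thesis using test_cycle_nth(5,6) by (simp only:) simp
  next
    case 7
    with k_eq have "(x + 1) mod k = 0" by (simp add: add.commute)
    with 7 show ?thesis using test_cycle_nth(6) test_cycle_nth(1)[of 0]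
      by (simp only:) (simp add: bridge_def insert_commute)
  qed
qed

lemma test_cycle_iff:
  assumes Z: "Z \<subseteq> slots" and "p < r" "q < r" "i < s" "1 \<le> j" and bridge: "bridge_at j = bridge p q"
  shows "is_kcycle (graphs Z j) k (test_cycle p q i) \<longleftrightarrow> (p, i) \<in> Z \<and> (r + q, i) \<in> Z"
proof
  assume "is_kcycle (graphs Z j) k (test_cycle p q i)"
  then have "{test_cycle p q i ! x, test_cycle p q i ! ((x + 1) mod k)} \<in> graphs Z j" if "x < k" for x
    using that unfolding is_kcycle_def by blast
  note edge = this
  have "(d + 1) mod k = d + 1" "(d + 4 + 1) mod k = d + 5"
    using k_eq by simp_all
  then have "{node p d, node p (d + 2 + i)} \<in> graphs Z j"
    "{node (r + q) (d + 2 + i), node (r + q) d} \<in> graphs Z j"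
    using edge[of d] edge[of "d + 4"] test_cycle_nth(1)[of d] test_cycle_nth(2,5,6) k_eq
    by (simp_all only:)
  then show "(p, i) \<in> Z \<and> (r + q, i) \<in> Z"
    using middle_edge_iff[OF Z _ \<open>i < s\<close> \<open>1 \<le> j\<close>] assms by (simp add: insert_commute)
next
  assume both: "(p, i) \<in> Z \<and> (r + q, i) \<in> Z"
  have "bridge p q \<subseteq> graphs Z j"
    using bridge \<open>1 \<le> j\<close> unfolding graphs_def by auto
  moreover have "{{node p m, node p (Suc m)} | m. m < d} \<subseteq> graphs Z j"
    using path_edge[of p _ j Z] assms by auto
  moreover have "{{node p d, node p (d + 2 + i)}, {node p (d + 2 + i), node p (d + 1)},
     {node (r + q) (d + 1), node (r + q) (d + 2 + i)}, {node (r + q) (d + 2 + i), node (r + q) d}}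
    \<subseteq> graphs Z j"
    using middle_edge_iff[OF Z, of p i j] middle_edge_iff[OF Z, of "r + q" i j]
      middle_edge_right[OF Z, of p i j] middle_edge_right[OF Z, of "r + q" i j] assms both
    by (simp add: insert_commute)
  ultimately have "{test_cycle p q i ! x, test_cycle p q i ! ((x + 1) mod k)} \<in> graphs Z j"
    if "x < k" for x
    using test_cycle_edge[OF that, of p q i] by blast
  then show "is_kcycle (graphs Z j) k (test_cycle p q i)"
    using length_test_cycle distinct_test_cycle assms unfolding is_kcycle_def by blast
qed

lemma phase_index_lt: "p < r \<Longrightarrow> q < r \<Longrightarrow> p * r + q < r * r"
proof -
  assume "p < r" "q < r"
  then have "p * r + q < (p + 1) * r"
    by simp
  also have "\<dots> \<le> r * r"
    using \<open>p < r\<close> by (intro mult_right_mono) auto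
  finally show ?thesis .
qed

lemma phase_of_round:
  assumes "1 \<le> y" "y \<le> L"
  shows "(phase_start p q + y - 1) div L = p * r + q"
proof -
  have "phase_start p q + y - 1 = (y - 1) + (p * r + q) * L"
    using assms(1) unfolding phase_start_def by simp
  moreover have "y - 1 < L"
    using assms by simp
  ultimately show ?thesis
    using L_ge_2 by simp
qed

lemma bridge_at_phase:
  assumes "p < r" "q < r" "1 \<le> y" "y \<le> L"
  shows "bridge_at (phase_start p q + y) = bridge p q"
  using phase_of_round[OF assms(3,4)] phase_index_lt[OF assms(1,2)] assms
  unfolding bridge_at_def by simp

lemma answer_iff:
  assumes Z: "Z \<subseteq> slots" and pq: "p < r" "q < r" "i < s" and x: "query_round Z p q = Some x"
  shows "(\<exists>v\<in>set (test_cycle p q i). dans A n v (state Z (phase_start p q + x) v) (test_cycle p q i))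
    \<longleftrightarrow> (p, i) \<in> Z \<and> (r + q, i) \<in> Z"
proof -
  have x: "2 \<le> x" "x \<le> L" "consistent_at Z p q (phase_start p q + x)"
    using query_round_SomeD[OF x] by auto
  have in_gadgets: "set (test_cycle p q i) \<subseteq> gadget p \<union> gadget (r + q)"
    using set_test_cycle_subset[OF pq(3)] .
  then have "set (test_cycle p q i) \<subseteq> {..<n}"
    using gadget_lt_n[of p] gadget_lt_n[of "r + q"] pq by fastforce
  moreover have "\<forall>v\<in>set (test_cycle p q i). \<not> dincons A n v (state Z (phase_start p q + x) v)"
    using x(3) in_gadgets unfolding consistent_at_def by blast
  ultimately have "(\<exists>v\<in>set (test_cycle p q i). dans A n v (state Z (phase_start p q + x) v) (test_cycle p q i))
      \<longleftrightarrow> is_kcycle (graphs Z (phase_start p q + (x - 1))) k (test_cycle p q i)"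
    using lists[unfolded lists_kcycles_def, rule_format, of "graphs Z" "phase_start p q + x" "test_cycle p q i"]
      adversary_graphs[OF Z] x(1) length_test_cycle distinct_test_cycle[OF pq(1,3)]
    unfolding state_def by (simp add: add_diff_assoc)
  also have "\<dots> \<longleftrightarrow> (p, i) \<in> Z \<and> (r + q, i) \<in> Z"
    using test_cycle_iff[OF Z pq] bridge_at_phase[OF pq(1,2), of "x - 1"] x by simp
  finally show ?thesis .
qed

lemma certified_subset:
  assumes Z: "Z \<subseteq> slots" and c: "c < 2 * r"
  shows "certified Z c \<subseteq> Z - row c"
proof
  fix y assume "y \<in> certified Z c"
  then obtain q i x v where y: "y = (partner c q, i)" "q < r" "i < s"
    "query_round Z (phase_left c q) (phase_right c q) = Some x"
    "v \<in> set (test_cycle (phase_left c q) (phase_right c q) i)"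
    "dans A n v (state Z (phase_start (phase_left c q) (phase_right c q) + x) v)
       (test_cycle (phase_left c q) (phase_right c q) i)"
    unfolding certified_def by blast
  note phase = phase_of_gadget[OF c y(2)]
  have "(phase_left c q, i) \<in> Z \<and> (r + phase_right c q, i) \<in> Z"
    using answer_iff[OF Z phase(1,2) y(3,4)] y(5,6) by blast
  moreover have "partner c q \<noteq> c"
    using phase by auto
  ultimately show "y \<in> Z - row c"
    using phase(3) y(1) unfolding row_def by auto
qed

lemma common_slot_certified:
  assumes Z: "Z \<subseteq> slots" and pq: "p < r" "q < r" "i < s" and "query_round Z p q \<noteq> None"
    and "(p, i) \<in> Z" "(r + q, i) \<in> Z"
  shows "(r + q, i) \<in> certified Z p \<or> (p, i) \<in> certified Z (r + q)"
proof -
  obtain x where x: "query_round Z p q = Some x"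
    using assms(5) by auto
  then obtain v where v: "v \<in> set (test_cycle p q i)" "dans A n v (state Z (phase_start p q + x) v) (test_cycle p q i)"
    using answer_iff[OF Z pq] assms(6,7) by blast
  have left: "phase_left p q = p" "phase_right p q = q" "partner p q = r + q"
    and right: "phase_left (r + q) p = p" "phase_right (r + q) p = q" "partner (r + q) p = p"
    using pq unfolding phase_left_def phase_right_def partner_def by auto
  from v(1) consider "v \<in> gadget p" | "v \<in> gadget (r + q)"
    using set_test_cycle_subset[OF pq(3)] by blast
  then show ?thesis
  proof cases
    case 1
    have "(partner p q, i) \<in> certified Z p"
      unfolding certified_def
      by (rule CollectI, rule exI[of _ q], rule exI[of _ i]) (use pq x v 1 left in auto)
    then show ?thesis
      using left by simp
  next
    case 2
    have "(partner (r + q) p, i) \<in> certified Z (r + q)"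
      unfolding certified_def
      by (rule CollectI, rule exI[of _ p], rule exI[of _ i]) (use pq x v 2 right in auto)
    then show ?thesis
      using right by simp
  qed
qed

section \<open>Counting failed phases\<close>

definition short_msgs :: "bool list set" where
  "short_msgs = {xs. length xs \<le> b}"

definition query_choices :: "nat option set" where
  "query_choices = insert None (Some ` {2..L})"

definition view_bits :: nat where
  "view_bits = 2 * r * L * (b + 1) + r * L"

lemma card_short_msgs: "card short_msgs \<le> 2 ^ (b + 1)"
proof -
  have "card short_msgs = (\<Sum>i\<le>b. 2 ^ i)"
    using card_lists_length_le[of "UNIV :: bool set" b] unfolding short_msgs_def by simp
  also have "\<dots> < 2 ^ (b + 1)"
    by (induction b) simp_all
  finally show ?thesis
    by simp
qed

lemma card_query_choices: "card query_choices = L"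
  using L_ge_2 unfolding query_choices_def by (simp add: card_image)

lemma view_mem:
  "view Z c \<in> Pow (row c) \<times> (msg_index \<rightarrow>\<^sub>E short_msgs) \<times> ({..<r} \<rightarrow>\<^sub>E query_choices)"
proof -
  have "incoming Z c y \<in> short_msgs" for y
    using msg_length unfolding short_msgs_def incoming_def by (simp add: case_prod_beta Let_def)
  moreover have "query_round Z p q \<in> query_choices" for p q
    using query_round_SomeD[of Z p q] unfolding query_choices_def by (cases "query_round Z p q") auto
  ultimately show ?thesis
    unfolding view_def by auto
qed

lemma card_views:
  "card ((\<lambda>Z. view Z c) ` Pow slots) \<le> 2 ^ card (row c) * 2 ^ view_bits"
proof -
  let ?V = "Pow (row c) \<times> (msg_index \<rightarrow>\<^sub>E short_msgs) \<times> ({..<r} \<rightarrow>\<^sub>E query_choices)"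
  have fin: "finite (row c)" "finite msg_index" "finite short_msgs" "finite query_choices"
    unfolding row_def msg_index_def short_msgs_def query_choices_def
    using finite_lists_length_le[of "UNIV :: bool set" b] by simp_all
  have "card ((\<lambda>Z. view Z c) ` Pow slots) \<le> card ?V"
    using fin view_mem by (intro card_mono image_subsetI) (simp_all add: finite_PiE)
  also have "card ?V = 2 ^ card (row c) * (card short_msgs ^ (2 * r * L) * L ^ r)"
    using fin card_query_choices
    by (simp add: card_cartesian_product card_PiE card_Pow msg_index_def ac_simps)
  also have "\<dots> \<le> 2 ^ card (row c) * ((2 ^ (b + 1)) ^ (2 * r * L) * (2 ^ L) ^ r)"
    using card_short_msgs by (intro mult_le_mono2 mult_le_mono power_mono) (simp_all add: less_imp_le)
  also have "\<dots> = 2 ^ card (row c) * (2 ^ (2 * r * L * (b + 1)) * 2 ^ (r * L))"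
    by (simp only: power_mult[symmetric] mult_ac)
  also have "\<dots> = 2 ^ card (row c) * 2 ^ view_bits"
    unfolding view_bits_def by (simp only: power_add)
  finally show ?thesis .
qed

lemma finite_slots: "finite slots"
  unfolding slots_def by simp

lemma sum_card_certified_le:
  assumes "c < 2 * r"
  shows "(\<Sum>Z\<in>Pow slots. card (certified Z c)) \<le> (2 * view_bits + 3) * 2 ^ card slots"
proof -
  interpret bounded_view slots "row c" "\<lambda>Z. view Z c" "\<lambda>Z. certified Z c" view_bits
  proof
    show "row c \<subseteq> slots"
      using assms unfolding row_def slots_def by auto
    show "certified Z c = certified Z' c \<and> Z \<inter> row c = Z' \<inter> row c"
      if "Z \<subseteq> slots" "Z' \<subseteq> slots" "view Z c = view Z' c" for Z Z'
      using certified_eq[OF that] that(3) unfolding view_def by simp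
  qed (use finite_slots certified_subset assms card_views in auto)
  show ?thesis
    by (rule sum_card_le)
qed

definition common_slots :: "(nat \<times> nat) set \<Rightarrow> nat \<Rightarrow> nat \<Rightarrow> nat set" where
  "common_slots Z p q = {i \<in> {..<s}. (p, i) \<in> Z \<and> (r + q, i) \<in> Z}"

definition failed_phases :: "(nat \<times> nat) set \<Rightarrow> (nat \<times> nat) set" where
  "failed_phases Z = {(p, q) \<in> {..<r} \<times> {..<r}. query_round Z p q = None}"

lemma sum_card_partner_certified_le:
  assumes "Z \<subseteq> slots" "c < 2 * r"
  shows "(\<Sum>q<r. card {i \<in> {..<s}. (partner c q, i) \<in> certified Z c}) \<le> card (certified Z c)"
proof -
  let ?S = "\<lambda>q. Pair (partner c q) ` {i \<in> {..<s}. (partner c q, i) \<in> certified Z c}"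
  have "finite (certified Z c)"
    using certified_subset[OF assms] assms(1) finite_slots by (meson Diff_subset finite_subset)
  moreover have "partner c q = partner c q' \<Longrightarrow> q = q'" for q q'
    unfolding partner_def by (auto split: if_splits)
  ultimately have "(\<Sum>q<r. card (?S q)) = card (\<Union>q<r. ?S q)"
    by (intro card_UN_disjoint[symmetric]) auto
  also have "\<dots> \<le> card (certified Z c)"
    using \<open>finite (certified Z c)\<close> by (intro card_mono) auto
  finally show ?thesis
    by (simp add: card_image inj_on_def)
qed

lemma card_common_slots_le:
  assumes "Z \<subseteq> slots" "p < r" "q < r"
  shows "card (common_slots Z p q) \<le> (if query_round Z p q = None then s else 0)
    + card {i \<in> {..<s}. (partner p q, i) \<in> certified Z p}
    + card {i \<in> {..<s}. (partner (r + q) p, i) \<in> certified Z (r + q)}"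
proof (cases "query_round Z p q = None")
  case True
  have "card (common_slots Z p q) \<le> card {..<s}"
    unfolding common_slots_def by (intro card_mono) auto
  then show ?thesis
    using True by simp
next
  case False
  have "partner p q = r + q" "partner (r + q) p = p"
    using assms unfolding partner_def by auto
  then have "common_slots Z p q \<subseteq> {i \<in> {..<s}. (partner p q, i) \<in> certified Z p}
      \<union> {i \<in> {..<s}. (partner (r + q) p, i) \<in> certified Z (r + q)}"
    using common_slot_certified[OF assms _ False] unfolding common_slots_def by auto
  then have "card (common_slots Z p q) \<le> card ({i \<in> {..<s}. (partner p q, i) \<in> certified Z p}
      \<union> {i \<in> {..<s}. (partner (r + q) p, i) \<in> certified Z (r + q)})"
    by (intro card_mono) auto
  then show ?thesis
    using False card_Un_le order_trans by fastforce
qed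


lemma sum_failed_phases:
  "(\<Sum>p<r. \<Sum>q<r. if query_round Z p q = None then s else 0) = s * card (failed_phases Z)"
proof -
  have "(\<Sum>p<r. \<Sum>q<r. if query_round Z p q = None then s else 0)
      = (\<Sum>pq\<in>{..<r} \<times> {..<r}. if pq \<in> failed_phases Z then s else 0)"
    unfolding sum.cartesian_product by (intro sum.cong) (auto simp: failed_phases_def split: if_splits)
  also have "\<dots> = s * card (failed_phases Z)"
    using inf.absorb2[of "failed_phases Z" "{..<r} \<times> {..<r}"]
    by (simp add: sum.If_cases failed_phases_def subset_iff)
  finally show ?thesis .
qed

lemma sum_card_common_slots_le:
  assumes "Z \<subseteq> slots"
  shows "(\<Sum>p<r. \<Sum>q<r. card (common_slots Z p q))
    \<le> s * card (failed_phases Z) + (\<Sum>c<2 * r. card (certified Z c))"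
proof -
  let ?g = "\<lambda>p q. card {i \<in> {..<s}. (partner p q, i) \<in> certified Z p}"
  let ?h = "\<lambda>q p. card {i \<in> {..<s}. (partner (r + q) p, i) \<in> certified Z (r + q)}"
  have "(\<Sum>p<r. \<Sum>q<r. card (common_slots Z p q))
      \<le> (\<Sum>p<r. \<Sum>q<r. (if query_round Z p q = None then s else 0) + ?g p q + ?h q p)"
    using card_common_slots_le[OF assms] by (intro sum_mono) auto
  also have "\<dots> = s * card (failed_phases Z) + (\<Sum>p<r. \<Sum>q<r. ?g p q) + (\<Sum>q<r. \<Sum>p<r. ?h q p)"
    using sum.swap[of "\<lambda>p q. ?h q p" "{..<r}" "{..<r}"] by (simp add: sum.distrib sum_failed_phases)
  also have "\<dots> \<le> s * card (failed_phases Z) + (\<Sum>p<r. card (certified Z p)) + (\<Sum>q<r. card (certified Z (r + q)))"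
    using sum_card_partner_certified_le[OF assms] by (intro add_mono sum_mono) auto
  finally show ?thesis
    by (simp add: sum_lessThan_double)
qed

lemma sum_card_common_slots:
  assumes "p < r" "q < r"
  shows "4 * (\<Sum>Z\<in>Pow slots. card (common_slots Z p q)) = s * 2 ^ card slots"
proof -
  have "(\<Sum>Z\<in>Pow slots. card (common_slots Z p q))
      = (\<Sum>Z\<in>Pow slots. \<Sum>i<s. if (p, i) \<in> Z \<and> (r + q, i) \<in> Z then 1 else 0)"
    unfolding common_slots_def by (simp add: sum.If_cases Int_def)
  also have "\<dots> = (\<Sum>i<s. card {Z \<in> Pow slots. (p, i) \<in> Z \<and> (r + q, i) \<in> Z})"
    using finite_slots by (subst sum.swap) (simp add: sum.If_cases Int_def)
  finally have "4 * (\<Sum>Z\<in>Pow slots. card (common_slots Z p q))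
      = (\<Sum>i<s. 4 * card {Z \<in> Pow slots. (p, i) \<in> Z \<and> (r + q, i) \<in> Z})"
    by (simp add: sum_distrib_left)
  also have "\<dots> = (\<Sum>i<s. 2 ^ card slots)"
    using assms by (intro sum.cong refl card_Pow_containing_pair finite_slots) (auto simp: slots_def)
  finally show ?thesis
    by simp
qed

lemma sum_card_failed_phases_ge:
  "r * r * s * 2 ^ card slots
    \<le> 4 * (s * (\<Sum>Z\<in>Pow slots. card (failed_phases Z))) + 8 * (r * (2 * view_bits + 3) * 2 ^ card slots)"
proof -
  have "r * r * s * 2 ^ card slots = (\<Sum>p<r. \<Sum>q<r. 4 * (\<Sum>Z\<in>Pow slots. card (common_slots Z p q)))"
    by (simp add: sum_card_common_slots)
  also have "\<dots> = 4 * (\<Sum>Z\<in>Pow slots. \<Sum>p<r. \<Sum>q<r. card (common_slots Z p q))"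
    by (simp only: sum.swap[of _ "{..<r}" "Pow slots"]) (simp add: sum_distrib_left)
  also have "\<dots> \<le> 4 * (\<Sum>Z\<in>Pow slots. s * card (failed_phases Z) + (\<Sum>c<2 * r. card (certified Z c)))"
    using sum_card_common_slots_le by (intro mult_le_mono2 sum_mono) auto
  also have "\<dots> = 4 * (s * (\<Sum>Z\<in>Pow slots. card (failed_phases Z)))
      + 4 * (\<Sum>c<2 * r. \<Sum>Z\<in>Pow slots. card (certified Z c))"
    by (simp only: sum.distrib sum_distrib_left[symmetric] sum.swap[of _ "Pow slots" "{..<2 * r}"]
        add_mult_distrib2)
  also have "\<dots> \<le> 4 * (s * (\<Sum>Z\<in>Pow slots. card (failed_phases Z)))
      + 4 * (\<Sum>c<2 * r. (2 * view_bits + 3) * 2 ^ card slots)"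
    using sum_card_certified_le by (intro add_mono mult_le_mono2 sum_mono) auto
  finally show ?thesis
    by (simp add: mult_ac)
qed

lemma exists_many_failed_phases:
  assumes "16 * (2 * view_bits + 3) \<le> r * s"
  shows "\<exists>Z\<subseteq>slots. r * r \<le> 8 * card (failed_phases Z)"
proof (rule ccontr)
  define P where "P = (2::nat) ^ card slots"
  define X where "X = (\<Sum>Z\<in>Pow slots. card (failed_phases Z))"
  define V where "V = 2 * view_bits + 3"
  assume "\<not> ?thesis"
  then have "8 * card (failed_phases Z) + 1 \<le> r * r" if "Z \<in> Pow slots" for Z
    using that by (simp add: not_le Suc_le_eq)
  then have "(\<Sum>Z\<in>Pow slots. 8 * card (failed_phases Z) + 1) \<le> (\<Sum>Z\<in>Pow slots. r * r)"
    by (rule sum_mono)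
  also have "(\<Sum>Z\<in>Pow slots. 8 * card (failed_phases Z) + 1) = 8 * X + P"
    unfolding X_def P_def using finite_slots by (subst sum.distrib) (simp add: sum_distrib_left card_Pow)
  also have "(\<Sum>Z\<in>Pow slots. r * r) = r * r * P"
    unfolding P_def using finite_slots by (simp add: card_Pow)
  finally have "s * (8 * X + P) \<le> s * (r * r * P)"
    by (rule mult_le_mono2)
  then have few: "8 * (s * X) + s * P \<le> r * r * s * P"
    by (simp add: algebra_simps)
  have "16 * V * (r * P) \<le> r * s * (r * P)"
    using assms unfolding V_def by (rule mult_le_mono1)
  then have "16 * (r * V * P) \<le> r * r * s * P"
    by (simp add: mult_ac)
  moreover have "r * r * s * P \<le> 4 * (s * X) + 8 * (r * V * P)"
    using sum_card_failed_phases_ge unfolding P_def X_def V_def .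
  ultimately have "s * P = 0"
    using few by linarith
  then show False
    using s_pos unfolding P_def by simp
qed

lemma phase_rounds_disjoint:
  assumes "p < r" "q < r" "p' < r" "q' < r"
    and "t \<in> {phase_start p q + 2..phase_start p q + L}" "t \<in> {phase_start p' q' + 2..phase_start p' q' + L}"
  shows "(p, q) = (p', q')"
proof -
  have "1 \<le> t - phase_start p q" "t - phase_start p q \<le> L"
    "1 \<le> t - phase_start p' q'" "t - phase_start p' q' \<le> L"
    using assms(5,6) by auto
  then have "p * r + q = (t - 1) div L" "(t - 1) div L = p' * r + q'"
    using phase_of_round[of "t - phase_start p q" p q] phase_of_round[of "t - phase_start p' q'" p' q']
      assms(5,6) by simp_all
  then have "(p * r + q) div r = (p' * r + q') div r" "(p * r + q) mod r = (p' * r + q') mod r"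
    by simp_all
  then show ?thesis
    using assms(1-4) by simp
qed

lemma failed_phase_rounds:
  assumes "(p, q) \<in> failed_phases Z" "t \<in> {phase_start p q + 2..phase_start p q + L}"
  shows "t \<in> {j \<in> {1..r * r * L}. \<exists>v<n. dincons A n v (run A n (graphs Z) j v)}"
proof -
  have pq: "p < r" "q < r" "query_round Z p q = None"
    using assms(1) unfolding failed_phases_def by auto
  have "t - phase_start p q \<in> {2..L}" "t = phase_start p q + (t - phase_start p q)"
    using assms(2) by auto
  then have "\<not> consistent_at Z p q t"
    using pq(3) unfolding query_round_def by (metis (no_types, lifting) option.distinct(1))
  then obtain v where v: "v \<in> gadget p \<union> gadget (r + q)" "dincons A n v (state Z t v)"
    unfolding consistent_at_def by blast
  have "v < n"
    using v(1) gadget_lt_n[of p v] gadget_lt_n[of "r + q" v] pq by auto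
  moreover have "t \<le> (p * r + q + 1) * L"
    using assms(2) unfolding phase_start_def by simp
  moreover have "(p * r + q + 1) * L \<le> r * r * L"
    using phase_index_lt[OF pq(1,2)] by (intro mult_le_mono1) simp
  ultimately show ?thesis
    using v(2) assms(2) unfolding state_def by auto
qed

lemma incons_rounds_ge:
  "(L - 1) * card (failed_phases Z) \<le> incons_rounds A n (graphs Z) (r * r * L)"
proof -
  let ?rounds = "\<lambda>(p, q). {phase_start p q + 2..phase_start p q + L}"
  have "finite (failed_phases Z)"
    unfolding failed_phases_def by (rule finite_subset[of _ "{..<r} \<times> {..<r}"]) auto
  moreover have "?rounds pq \<inter> ?rounds pq' = {}"
    if "pq \<in> failed_phases Z" "pq' \<in> failed_phases Z" "pq \<noteq> pq'" for pq pq'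
    using that phase_rounds_disjoint unfolding failed_phases_def by fastforce
  ultimately have "(\<Sum>pq\<in>failed_phases Z. card (?rounds pq)) = card (\<Union>pq\<in>failed_phases Z. ?rounds pq)"
    by (intro card_UN_disjoint[symmetric]) auto
  also have "\<dots> \<le> incons_rounds A n (graphs Z) (r * r * L)"
    unfolding incons_rounds_def using failed_phase_rounds by (intro card_mono) auto
  finally show ?thesis
    by (simp add: case_prod_beta mult.commute)
qed

lemma finite_slots_row:
  assumes "Z \<subseteq> slots"
  shows "finite {i. (c, i) \<in> Z}" "card {i. (c, i) \<in> Z} \<le> s"
proof -
  have "{i. (c, i) \<in> Z} \<subseteq> {..<s}"
    using assms unfolding slots_def by auto
  then show "finite {i. (c, i) \<in> Z}" "card {i. (c, i) \<in> Z} \<le> s"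
    using finite_subset card_mono[of "{..<s}"] by fastforce+
qed

lemma finite_gadget_edges: "Z \<subseteq> slots \<Longrightarrow> finite (gadget_edges c Z)"
  unfolding gadget_edges_def using finite_slots_row by simp

lemma card_gadget_edges_le:
  assumes "Z \<subseteq> slots"
  shows "card (gadget_edges c Z) \<le> d + 2 * s"
proof -
  let ?path = "(\<lambda>m. {node c m, node c (Suc m)}) ` {..<d}"
  let ?left = "(\<lambda>i. {node c d, node c (d + 2 + i)}) ` {i. (c, i) \<in> Z}"
  let ?right = "(\<lambda>i. {node c (d + 2 + i), node c (d + 1)}) ` {i. (c, i) \<in> Z}"
  have "gadget_edges c Z = ?path \<union> ?left \<union> ?right"
    unfolding gadget_edges_def by auto
  then have "card (gadget_edges c Z) \<le> card ?path + card ?left + card ?right"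
    using card_Un_le[of "?path \<union> ?left" ?right] card_Un_le[of ?path ?left] by simp
  moreover have "card ?path \<le> d"
    using card_image_le[of "{..<d}"] by simp
  moreover have "card ?left \<le> s" "card ?right \<le> s"
    using card_image_le[OF finite_slots_row(1)[OF assms]] finite_slots_row(2)[OF assms] le_trans
    by blast+
  ultimately show ?thesis
    by simp
qed

lemma card_static_edges_le:
  assumes "Z \<subseteq> slots"
  shows "card (static_edges Z) \<le> 2 * r * (d + 2 * s)"
proof -
  have "card (static_edges Z) \<le> (\<Sum>c<2 * r. card (gadget_edges c Z))"
    unfolding static_edges_def by (rule card_UN_le) simp
  also have "\<dots> \<le> 2 * r * (d + 2 * s)"
    using sum_bounded_above[of "{..<2 * r}" "\<lambda>c. card (gadget_edges c Z)" "d + 2 * s"]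
      card_gadget_edges_le[OF assms] by (simp add: mult_ac)
  finally show ?thesis .
qed

lemma card_bridge_at_le: "card (bridge_at j) \<le> 2"
  unfolding bridge_at_def bridge_def by (simp add: card_insert_if)

lemma graphs_change_le:
  assumes "Z \<subseteq> slots" "2 \<le> j"
  shows "card ((graphs Z j - graphs Z (j - 1)) \<union> (graphs Z (j - 1) - graphs Z j))
    \<le> (if (j - 1) mod L = 0 then 4 else 0)"
proof (cases "(j - 1) mod L = 0")
  case False
  obtain m where "j - 1 = Suc m" "j - 1 - 1 = m"
    using assms(2) by (cases "j - 1") auto
  with False have "(j - 1) div L = (j - 1 - 1) div L"
    by (simp add: div_Suc)
  then have "graphs Z j = graphs Z (j - 1)"
    using assms(2) unfolding graphs_def bridge_at_def by auto
  then show ?thesis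
    by simp
next
  case True
  have "(graphs Z j - graphs Z (j - 1)) \<union> (graphs Z (j - 1) - graphs Z j) \<subseteq> bridge_at j \<union> bridge_at (j - 1)"
    using assms(2) unfolding graphs_def by auto
  moreover have "finite (bridge_at j \<union> bridge_at (j - 1))"
    unfolding bridge_at_def bridge_def by simp
  ultimately have "card ((graphs Z j - graphs Z (j - 1)) \<union> (graphs Z (j - 1) - graphs Z j))
      \<le> card (bridge_at j \<union> bridge_at (j - 1))"
    by (rule card_mono[rotated])
  also have "\<dots> \<le> card (bridge_at j) + card (bridge_at (j - 1))"
    by (rule card_Un_le)
  finally show ?thesis
    using True card_bridge_at_le[of j] card_bridge_at_le[of "j - 1"] by simp
qed

lemma card_phase_boundaries_le: "card {j \<in> {2..r * r * L}. (j - 1) mod L = 0} \<le> r * r"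
proof -
  have "{j \<in> {2..r * r * L}. (j - 1) mod L = 0} \<subseteq> (\<lambda>f. f * L + 1) ` {..<r * r}"
  proof
    fix j assume j: "j \<in> {j \<in> {2..r * r * L}. (j - 1) mod L = 0}"
    then have "j - 1 = (j - 1) div L * L"
      using div_mult_mod_eq[of "j - 1" L] by simp
    then have "j = (j - 1) div L * L + 1"
      using j by simp
    moreover have "(j - 1) div L < r * r"
      using j by (intro less_mult_imp_div_less) auto
    ultimately show "j \<in> (\<lambda>f. f * L + 1) ` {..<r * r}"
      by blast
  qed
  then have "card {j \<in> {2..r * r * L}. (j - 1) mod L = 0} \<le> card ((\<lambda>f. f * L + 1) ` {..<r * r})"
    by (intro card_mono) auto
  also have "\<dots> \<le> r * r"
    using card_image_le[of "{..<r * r}" "\<lambda>f. f * L + 1"] by simp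
  finally show ?thesis .
qed

lemma changes_le:
  assumes "Z \<subseteq> slots"
  shows "changes (graphs Z) (r * r * L) \<le> 2 * r * (d + 2 * s) + 2 + 4 * (r * r)"
proof -
  let ?change = "\<lambda>j. card ((graphs Z j - graphs Z (j - 1)) \<union> (graphs Z (j - 1) - graphs Z j))"
  have "?change 1 \<le> card (static_edges Z) + card (bridge_at 1)"
    unfolding graphs_def by (simp add: card_Un_le)
  then have first: "?change 1 \<le> 2 * r * (d + 2 * s) + 2"
    using card_static_edges_le[OF assms] card_bridge_at_le[of 1] by linarith
  have "(\<Sum>j\<in>{2..r * r * L}. ?change j) \<le> (\<Sum>j\<in>{2..r * r * L}. if (j - 1) mod L = 0 then 4 else 0)"
    using graphs_change_le[OF assms] by (intro sum_mono) simp
  also have "\<dots> = 4 * card {j \<in> {2..r * r * L}. (j - 1) mod L = 0}"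
    by (simp add: sum.If_cases Int_def)
  also have "\<dots> \<le> 4 * (r * r)"
    using card_phase_boundaries_le by simp
  finally have rest: "(\<Sum>j\<in>{2..r * r * L}. ?change j) \<le> 4 * (r * r)" .
  have "{1..r * r * L} = insert 1 {2..r * r * L}"
    using r_pos L_ge_2 by (auto simp: Suc_le_eq)
  then have "changes (graphs Z) (r * r * L) = ?change 1 + (\<Sum>j\<in>{2..r * r * L}. ?change j)"
    unfolding changes_def by simp
  then show ?thesis
    using first rest by linarith
qed

lemma amortized_lower_bound:
  assumes "amortized_at_most A n C" "0 \<le> C" "16 * (2 * view_bits + 3) \<le> r * s"
  shows "real (L - 1) * real (r * r) \<le> 8 * C * real (2 * r * (d + 2 * s) + 2 + 4 * (r * r))"
proof -
  obtain Z where Z: "Z \<subseteq> slots" "r * r \<le> 8 * card (failed_phases Z)"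
    using exists_many_failed_phases[OF assms(3)] by blast
  have "(L - 1) * (r * r) \<le> 8 * ((L - 1) * card (failed_phases Z))"
    using Z(2) by simp
  also have "\<dots> \<le> 8 * incons_rounds A n (graphs Z) (r * r * L)"
    using incons_rounds_ge by simp
  finally have "real (L - 1) * real (r * r) \<le> 8 * real (incons_rounds A n (graphs Z) (r * r * L))"
    by (simp flip: of_nat_mult)
  also have "\<dots> \<le> 8 * (C * real (changes (graphs Z) (r * r * L)))"
    using assms(1) adversary_graphs[OF Z(1)] unfolding amortized_at_most_def by simp
  also have "\<dots> \<le> 8 * (C * real (2 * r * (d + 2 * s) + 2 + 4 * (r * r)))"
    using changes_le[OF Z(1)] assms(2) by (intro mult_left_mono) (simp_all only: of_nat_le_iff)
  finally show ?thesis
    by (simp add: mult_ac)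
qed
end

section \<open>Choice of the parameters\<close>

lemma amortized_ge_phase_length:
  fixes A :: "'s dds"
  assumes "k = d + 6" "d \<le> s" "48 \<le> s" "2 * s * (s + d + 2) \<le> n"
    and "\<And>v st I D u. length (dmsg A n v st I D u) \<le> b"
    and "lists_kcycles A n k" "amortized_at_most A n C" "0 \<le> C"
  shows "real ((s - 1) div (32 * (2 * b + 3))) \<le> 88 * C + 1"
proof (cases "(s - 1) div (32 * (2 * b + 3)) < 2")
  case True
  then show ?thesis
    using assms(8) by linarith
next
  case False
  define L where "L = (s - 1) div (32 * (2 * b + 3))"
  interpret kcycle_lower_bound A n k s s d L b
    using assms False unfolding L_def by unfold_locales auto
  have "L * (32 * (2 * b + 3)) + 1 \<le> s"
    using assms(3) div_times_less_eq_dividend[of "s - 1" "32 * (2 * b + 3)"] unfolding L_def by linarith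
  then have "s * (L * (32 * (2 * b + 3)) + 1) \<le> s * s"
    by (rule mult_le_mono2)
  then have "16 * (2 * view_bits + 3) \<le> s * s"
    using assms(3) unfolding view_bits_def by (simp add: algebra_simps)
  then have "real (L - 1) * real (s * s) \<le> 8 * C * real (2 * s * (d + 2 * s) + 2 + 4 * (s * s))"
    by (rule amortized_lower_bound[OF assms(7,8)])
  also have "\<dots> \<le> 8 * C * real (11 * (s * s))"
  proof -
    have "2 * s * d \<le> 2 * (s * s)" "2 \<le> s * s" "2 * s * (d + 2 * s) = 2 * s * d + 4 * (s * s)"
      using assms(2,3) le_square[of s] by (simp, linarith, simp add: algebra_simps)
    then have "2 * s * (d + 2 * s) + 2 + 4 * (s * s) \<le> 11 * (s * s)"
      by linarith
    then show ?thesis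
      using assms(8) by (intro mult_left_mono) (simp_all only: of_nat_le_iff)
  qed
  finally have "real (L - 1) \<le> 88 * C"
    using assms(3) by (simp add: mult.assoc)
  then show ?thesis
    using False unfolding L_def by linarith
qed

lemma bandwidth_length_le:
  "bandwidth A n c \<Longrightarrow> length (dmsg A n v st I D u) \<le> nat \<lfloor>c * ln (real n)\<rfloor>"
  unfolding bandwidth_def by (simp add: le_nat_floor)

lemma real_div_gt_diff_one: "real m / real n - 1 < real (m div n)"
  using real_of_int_floor_gt_diff_one[of "real m / real n"] by (simp only: floor_divide_of_nat_eq)

definition side :: "nat \<Rightarrow> nat" where
  "side n = nat \<lfloor>sqrt (real n) / 2\<rfloor>"

definition phase_length :: "real \<Rightarrow> nat \<Rightarrow> nat" where
  "phase_length c n = (side n - 1) div (32 * (2 * nat \<lfloor>c * ln (real n)\<rfloor> + 3))"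

lemma side_bounds: "sqrt (real n) / 2 - 1 < real (side n)" "real (side n) \<le> sqrt (real n) / 2"
  unfolding side_def by (linarith, rule of_nat_floor, simp)

lemma eventually_side_large:
  "\<forall>\<^sub>F n in sequentially. d \<le> side n \<and> 48 \<le> side n \<and> 2 * side n * (side n + d + 2) \<le> n"
proof -
  have "\<forall>\<^sub>F n in sequentially. real d + 49 \<le> sqrt (real n) / 2"
    by real_asymp
  then show ?thesis
  proof eventually_elim
    case (elim n)
    then have "d + 48 \<le> side n"
      using side_bounds(1)[of n] by linarith
    moreover have "real (2 * side n) * real (2 * side n) \<le> sqrt (real n) * sqrt (real n)"
      using side_bounds(2)[of n] by (intro mult_mono) simp_all
    then have "2 * side n * (2 * side n) \<le> n"
      by (simp flip: of_nat_mult)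
    ultimately show ?case
      using mult_le_mono2[of "side n + d + 2" "2 * side n" "2 * side n"] by simp
  qed
qed

lemma eventually_phase_length_large:
  fixes c :: real
  assumes "c > 0"
  shows "\<forall>\<^sub>F n in sequentially.
    sqrt (real n) / (128 * (2 * c + 3) * ln (real n)) + 1 < real (phase_length c n)"
proof -
  define K where "K = 2 * c + 3"
  have "K > 0"
    using assms unfolding K_def by simp
  then have "\<forall>\<^sub>F n in sequentially. 1 \<le> ln (real n) \<and> 4 \<le> sqrt (real n) \<and>
      sqrt (real n) / (128 * K * ln (real n)) + 2 < (sqrt (real n) / 2 - 2) / (32 * K * ln (real n))"
    by (intro eventually_conj) real_asymp+
  then show ?thesis
    unfolding K_def[symmetric]
  proof eventually_elim
    case (elim n)
    define b where "b = nat \<lfloor>c * ln (real n)\<rfloor>"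
    have "sqrt (real n) / 2 - 2 \<le> real (side n - 1)"
      using side_bounds(1)[of n] elim by (simp add: of_nat_diff)
    moreover have "real (32 * (2 * b + 3)) \<le> 32 * K * ln (real n)"
    proof -
      have "real b \<le> c * ln (real n)"
        unfolding b_def using assms elim by (intro of_nat_floor) simp
      then show ?thesis
        using elim unfolding K_def by (simp add: algebra_simps)
    qed
    ultimately have "(sqrt (real n) / 2 - 2) / (32 * K * ln (real n)) \<le> real (side n - 1) / real (32 * (2 * b + 3))"
      using elim by (intro frac_le) simp_all
    then show ?case
      using elim real_div_gt_diff_one[of "side n - 1" "32 * (2 * b + 3)"]
      unfolding phase_length_def b_def[symmetric] by linarith
  qed
qed

lemma eventually_not_amortized_at_most:
  fixes c :: real
  assumes "6 \<le> k" "c > 0"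
  defines "\<epsilon> \<equiv> 1 / (88 * (128 * (2 * c + 3)))"
  shows "\<forall>\<^sub>F n in sequentially. \<forall>A :: 's dds. bandwidth A n c \<and> lists_kcycles A n k \<longrightarrow>
    \<not> amortized_at_most A n (\<epsilon> * sqrt (real n) / ln (real n))"
  using eventually_side_large[of "k - 6"] eventually_phase_length_large[OF \<open>c > 0\<close>]
    eventually_ge_at_top[of 1]
proof eventually_elim
  case (elim n)
  have "88 * \<epsilon> = 1 / (128 * (2 * c + 3))"
    using \<open>c > 0\<close> unfolding \<epsilon>_def by (simp add: field_simps)
  then have bound: "88 * (\<epsilon> * sqrt (real n) / ln (real n)) + 1 < real (phase_length c n)"
    using elim by (simp add: mult.assoc[symmetric])
  have "0 \<le> \<epsilon> * sqrt (real n) / ln (real n)"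
    using \<open>c > 0\<close> elim unfolding \<epsilon>_def by simp
  show ?case
  proof (intro allI impI notI)
    fix A :: "'s dds"
    assume "bandwidth A n c \<and> lists_kcycles A n k" "amortized_at_most A n (\<epsilon> * sqrt (real n) / ln (real n))"
    then have "real (phase_length c n) \<le> 88 * (\<epsilon> * sqrt (real n) / ln (real n)) + 1"
      unfolding phase_length_def using assms(1) elim bandwidth_length_le \<open>0 \<le> \<epsilon> * sqrt (real n) / ln (real n)\<close>
      by (intro amortized_ge_phase_length[of k "k - 6"]) auto
    then show False
      using bound by linarith
  qed
qed

theorem theorem5:
  fixes k :: nat
  assumes "k \<ge> 6"
  shows "\<forall>c>0. \<exists>\<epsilon>>0. \<exists>N. \<forall>n\<ge>N. \<forall>A :: 's dds.
           bandwidth A n c \<and> lists_kcycles A n k \<longrightarrow>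
           \<not> amortized_at_most A n (\<epsilon> * sqrt (real n) / ln (real n))"
proof (intro allI impI)
  fix c :: real assume "c > 0"
  then have "1 / (88 * (128 * (2 * c + 3))) > 0"
    by simp
  then show "\<exists>\<epsilon>>0. \<exists>N. \<forall>n\<ge>N. \<forall>A :: 's dds. bandwidth A n c \<and> lists_kcycles A n k \<longrightarrow>
      \<not> amortized_at_most A n (\<epsilon> * sqrt (real n) / ln (real n))"
    using eventually_not_amortized_at_most[OF assms \<open>c > 0\<close>] unfolding eventually_sequentially by blast
qed

end
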